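(* Let $\theta_T=\sqrt{4T^{-1}\log\mu(V)}$. For any nonempty starting set $S_0\subseteq V$, any integer $T\geq 1$ and any constant $c>0$, the volume-biased evolving set process $(S_t)$ started from $S_0$ satisfies \[ \widehat{\mathbf P}_{S_0}\Big[\min_{0\le j<T}\phi(S_j)\leq \sqrt{c}\,\theta_T\Big] \geq 1-\frac1c. \]
   Context: Let $G=(V,E)$ be a finite simple undirected graph in which every vertex has positive degree $d(x)$. For $S\subseteq V$, $\mu(S)=\sum_{x\in S}d(x)$, $\partial(S)$ is the number of edges with exactly one endpoint in $S$, and $\phi(S)=\partial(S)/\mu(S)$. $\log$ is the natural logarithm. The lazy random walk has transition kernel $p(x,y)=1/(2d(x))$ if $\{x,y\}\in E$, $p(x,x)=1/2$, and $0$ otherwise; $p(x,S)=\sum_{y\in S}p(x,y)$. The evolving set process (ESP): from state $S$, pick $U$ uniform on $[0,1]$ and move to $\{y: p(y,S)\geq U\}$; $K(S,S')$ denotes its transition kernel. The volume-biased ESP is the Markov chain on nonempty subsets with kernel $\widehat K(S,S')=\frac{\mu(S')}{\mu(S)}K(S,S')$; $\widehat{\mathbf P}_{S_0}$ denotes its law started at $S_0$. *)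

theory Defs
  imports "HOL-Analysis.Analysis"
begin

definition simple_graph :: "'a set \<Rightarrow> ('a \<Rightarrow> 'a \<Rightarrow> bool) \<Rightarrow> bool" where
  "simple_graph V E \<longleftrightarrow> finite V \<and> (\<forall>x y. E x y \<longrightarrow> x \<in> V \<and> y \<in> V)
     \<and> (\<forall>x y. E x y \<longrightarrow> E y x) \<and> (\<forall>x. \<not> E x x)"

definition deg :: "'a set \<Rightarrow> ('a \<Rightarrow> 'a \<Rightarrow> bool) \<Rightarrow> 'a \<Rightarrow> nat" where
  "deg V E x = card {y \<in> V. E x y}"

definition vol :: "'a set \<Rightarrow> ('a \<Rightarrow> 'a \<Rightarrow> bool) \<Rightarrow> 'a set \<Rightarrow> real" where
  "vol V E S = (\<Sum>x\<in>S. real (deg V E x))"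

definition bdry :: "'a set \<Rightarrow> ('a \<Rightarrow> 'a \<Rightarrow> bool) \<Rightarrow> 'a set \<Rightarrow> real" where
  "bdry V E S = real (card {(x, y). x \<in> S \<and> y \<in> V - S \<and> E x y})"

definition cond :: "'a set \<Rightarrow> ('a \<Rightarrow> 'a \<Rightarrow> bool) \<Rightarrow> 'a set \<Rightarrow> real" where
  "cond V E S = bdry V E S / vol V E S"

definition lazy_p :: "'a set \<Rightarrow> ('a \<Rightarrow> 'a \<Rightarrow> bool) \<Rightarrow> 'a \<Rightarrow> 'a \<Rightarrow> real" where
  "lazy_p V E x y = (if E x y then 1 / (2 * real (deg V E x)) else if x = y then 1/2 else 0)"

definition lazy_pS :: "'a set \<Rightarrow> ('a \<Rightarrow> 'a \<Rightarrow> bool) \<Rightarrow> 'a \<Rightarrow> 'a set \<Rightarrow> real" where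
  "lazy_pS V E x S = (\<Sum>y\<in>S. lazy_p V E x y)"

text \<open>Evolving set process kernel: K(S,S') = P[{y. p(y,S) \<ge> U} = S'], U uniform on [0,1].\<close>
definition esp_K :: "'a set \<Rightarrow> ('a \<Rightarrow> 'a \<Rightarrow> bool) \<Rightarrow> 'a set \<Rightarrow> 'a set \<Rightarrow> real" where
  "esp_K V E S S' = measure lborel {u \<in> {0..1::real}. {y \<in> V. lazy_pS V E y S \<ge> u} = S'}"

definition esp_Khat :: "'a set \<Rightarrow> ('a \<Rightarrow> 'a \<Rightarrow> bool) \<Rightarrow> 'a set \<Rightarrow> 'a set \<Rightarrow> real" where
  "esp_Khat V E S S' = vol V E S' / vol V E S * esp_K V E S S'"

fun path_weight :: "('s \<Rightarrow> 's \<Rightarrow> real) \<Rightarrow> 's list \<Rightarrow> real" where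
  "path_weight k (x # y # rest) = k x y * path_weight k (y # rest)"
| "path_weight k _ = 1"

text \<open>Probability, under the volume-biased ESP started at S0, of an event P depending on
  the first T states (S_0, ..., S_{T-1}) (for T \<ge> 1), given by summing over all paths.\<close>
definition vbesp_prob :: "'a set \<Rightarrow> ('a \<Rightarrow> 'a \<Rightarrow> bool) \<Rightarrow> 'a set \<Rightarrow> nat \<Rightarrow> ('a set list \<Rightarrow> bool) \<Rightarrow> real" where
  "vbesp_prob V E S0 T P =
     (\<Sum>xs\<in>{xs. set xs \<subseteq> Pow V \<and> length xs = T - 1}.
        if P (S0 # xs) then path_weight (esp_Khat V E) (S0 # xs) else 0)"

end

theory Submission
  imports Defs
begin

text \<open>Under the volume-biased evolving set process the potential ln \<mu>(S_t)
  increases in expectation by at least \<phi>(S_t)^2/4 per step, and it always lies in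
  [0, ln \<mu>(V)].  Hence E[\<Sum>_{j<T} \<phi>(S_j)^2] \<le> 4 ln \<mu>(V) = T \<theta>_T^2.  If min_j \<phi>(S_j) > sqrt c \<theta>_T
  the sum exceeds c T \<theta>_T^2, which by Markov's inequality has probability at most 1/c.

  The drift comes from the contraction E_K[sqrt \<mu>(S')] \<le> sqrt \<mu>(S) (1 - \<phi>(S)^2/8) of the plain
  ESP (via ln x \<le> x - 1), which is proved by splitting the uniform threshold U at 1/2 and
  applying AM-GM on each half.\<close>

text \<open>Finite Markov chains, described by path weights.  A path of length n after a fixed
  start is a list of n states from the state space X.\<close>
definition paths :: "'s set \<Rightarrow> nat \<Rightarrow> 's list set" where
  "paths X n = {xs. set xs \<subseteq> X \<and> length xs = n}"

lemma finite_paths: "finite X \<Longrightarrow> finite (paths X n)"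
  unfolding paths_def by (simp add: finite_lists_length_eq)

lemma paths_0: "paths X 0 = {[]}"
  unfolding paths_def by auto

lemma sum_paths_Suc:
  assumes "finite X"
  shows "(\<Sum>xs\<in>paths X (Suc n). f xs) = (\<Sum>s\<in>X. \<Sum>ys\<in>paths X n. f (s # ys))"
proof -
  have paths_Suc: "paths X (Suc n) = (\<lambda>(s, ys). s # ys) ` (X \<times> paths X n)"
  proof (rule set_eqI)
    fix xs show "xs \<in> paths X (Suc n) \<longleftrightarrow> xs \<in> (\<lambda>(s, ys). s # ys) ` (X \<times> paths X n)"
      unfolding paths_def by (cases xs) (auto simp: image_iff)
  qed
  have "inj_on (\<lambda>(s, ys). s # ys) (X \<times> paths X n)" by (auto simp: inj_on_def)
  then have "(\<Sum>xs\<in>paths X (Suc n). f xs) = (\<Sum>(s, ys)\<in>X \<times> paths X n. f (s # ys))"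
    unfolding paths_Suc by (subst sum.reindex) (simp_all add: case_prod_unfold)
  also have "\<dots> = (\<Sum>s\<in>X. \<Sum>ys\<in>paths X n. f (s # ys))"
    by (rule sum.cartesian_product[symmetric])
  finally show ?thesis .
qed

text \<open>A kernel k on a finite state space X which is stochastic on a set G of "live" states
  and never moves from a live state to a dead one (for the ESP: G consists of the nonempty sets).\<close>
locale stochastic_kernel =
  fixes X G :: "'s set" and k :: "'s \<Rightarrow> 's \<Rightarrow> real"
  assumes finite_states: "finite X"
    and kernel_nonneg: "\<And>s s'. 0 \<le> k s s'"
    and row_sum: "\<And>s. s \<in> G \<Longrightarrow> (\<Sum>s'\<in>X. k s s') = 1"
    and stays_in_G: "\<And>s s'. s \<in> G \<Longrightarrow> s' \<in> X - G \<Longrightarrow> k s s' = 0"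
begin

lemma path_weight_nonneg: "0 \<le> path_weight k xs"
  by (induction xs rule: induct_list012) (auto simp: kernel_nonneg)

lemma sum_paths_Suc_weight:
  "(\<Sum>xs\<in>paths X (Suc n). path_weight k (s # xs) * g xs)
     = (\<Sum>s'\<in>X. k s s' * (\<Sum>ys\<in>paths X n. path_weight k (s' # ys) * g (s' # ys)))"
  by (simp add: sum_paths_Suc[OF finite_states] sum_distrib_left mult.assoc)

lemma expectation_le:
  assumes "s \<in> G" and "\<And>s'. s' \<in> G \<Longrightarrow> h s' \<le> M"
  shows "(\<Sum>s'\<in>X. k s s' * h s') \<le> M"
proof -
  have "(\<Sum>s'\<in>X. k s s' * h s') \<le> (\<Sum>s'\<in>X. k s s' * M)"
  proof (rule sum_mono)
    fix s' assume "s' \<in> X"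
    then show "k s s' * h s' \<le> k s s' * M"
      using assms stays_in_G[of s s'] by (cases "s' \<in> G") (auto intro: mult_left_mono kernel_nonneg)
  qed
  also have "\<dots> = M" using row_sum[OF assms(1)] by (simp add: sum_distrib_right[symmetric])
  finally show ?thesis .
qed

lemma total_path_weight:
  "s \<in> G \<Longrightarrow> (\<Sum>xs\<in>paths X n. path_weight k (s # xs)) = 1"
proof (induction n arbitrary: s)
  case 0
  then show ?case by (simp add: paths_0)
next
  case (Suc n)
  have "(\<Sum>xs\<in>paths X (Suc n). path_weight k (s # xs)) = (\<Sum>s'\<in>X. k s s' * (\<Sum>ys\<in>paths X n. path_weight k (s' # ys)))"
    using sum_paths_Suc_weight[where g="\<lambda>_. 1"] by simp
  also have "\<dots> = (\<Sum>s'\<in>X. k s s')"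
    using Suc stays_in_G by (intro sum.cong) auto
  finally show ?case using row_sum[OF Suc.prems] by simp
qed

lemma additive_functional_bound:
  assumes drift: "\<And>s. s \<in> G \<Longrightarrow> \<Phi> s + f s \<le> (\<Sum>s'\<in>X. k s s' * \<Phi> s')"
    and bounded: "\<And>s. s \<in> G \<Longrightarrow> \<Phi> s \<le> M"
    and "s \<in> G"
  shows "(\<Sum>xs\<in>paths X n. path_weight k (s # xs) * (\<Sum>j<Suc n. f ((s # xs) ! j))) \<le> M - \<Phi> s"
  using \<open>s \<in> G\<close>
proof (induction n arbitrary: s)
  case 0
  then show ?case using drift[of s] expectation_le[of s \<Phi> M] bounded by (simp add: paths_0)
next
  case (Suc n)
  let ?A = "\<lambda>s'. \<Sum>ys\<in>paths X n. path_weight k (s' # ys) * (\<Sum>j<Suc n. f ((s' # ys) ! j))"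
  have "(\<Sum>xs\<in>paths X (Suc n). path_weight k (s # xs) * (\<Sum>j<Suc (Suc n). f ((s # xs) ! j)))
      = (\<Sum>s'\<in>X. k s s' * (f s * (\<Sum>ys\<in>paths X n. path_weight k (s' # ys)) + ?A s'))"
  proof -
    have shift: "(\<Sum>j<Suc (Suc n). f ((s # xs) ! j)) = f s + (\<Sum>j<Suc n. f (xs ! j))" for xs
      by (simp only: sum.lessThan_Suc_shift) simp
    show ?thesis
      unfolding shift sum_paths_Suc_weight
      by (simp add: distrib_left sum.distrib sum_distrib_left mult.commute)
  qed
  also have "\<dots> \<le> (\<Sum>s'\<in>X. k s s' * (f s + M - \<Phi> s'))"
  proof (rule sum_mono)
    fix s' assume "s' \<in> X"
    show "k s s' * (f s * (\<Sum>ys\<in>paths X n. path_weight k (s' # ys)) + ?A s') \<le> k s s' * (f s + M - \<Phi> s')"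
    proof (cases "s' \<in> G")
      case True
      then show ?thesis using Suc.IH total_path_weight by (intro mult_left_mono kernel_nonneg) auto
    qed (use \<open>s' \<in> X\<close> stays_in_G Suc.prems in auto)
  qed
  also have "\<dots> = f s + M - (\<Sum>s'\<in>X. k s s' * \<Phi> s')"
    using row_sum[OF Suc.prems]
    by (simp add: algebra_simps sum_subtractf sum.distrib sum_distrib_left[symmetric] sum_distrib_right[symmetric])
  also have "\<dots> \<le> M - \<Phi> s" using drift[OF Suc.prems] by simp
  finally show ?case .
qed

end

lemma markov_lower_bound:
  fixes w F :: "'x \<Rightarrow> real"
  assumes "finite A" and "\<And>x. x \<in> A \<Longrightarrow> 0 \<le> w x" and "(\<Sum>x\<in>A. w x) = 1"
    and "0 < a" and "\<And>x. x \<in> A \<Longrightarrow> 0 \<le> F x" and "\<And>x. x \<in> A \<Longrightarrow> \<not> P x \<Longrightarrow> a \<le> F x"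
  shows "1 - (\<Sum>x\<in>A. w x * F x) / a \<le> (\<Sum>x\<in>A. if P x then w x else 0)"
proof -
  have "(\<Sum>x\<in>A. if P x then 0 else w x) \<le> (\<Sum>x\<in>A. w x * F x / a)"
  proof (rule sum_mono)
    fix x assume x: "x \<in> A"
    show "(if P x then 0 else w x) \<le> w x * F x / a"
    proof (cases "P x")
      case False
      then have "w x * 1 \<le> w x * (F x / a)"
        using assms(2,4,6) x by (intro mult_left_mono) auto
      then show ?thesis using False by simp
    qed (use assms(2,4,5) x in auto)
  qed
  moreover have "(\<Sum>x\<in>A. if P x then w x else 0) + (\<Sum>x\<in>A. if P x then 0 else w x) = 1"
    using assms(3) by (simp add: sum.distrib[symmetric] if_distrib cong: if_cong)
  ultimately show ?thesis by (simp add: sum_divide_distrib)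
qed

lemma sum_squares_ge_if_min_gt:
  fixes g :: "nat \<Rightarrow> real"
  assumes "1 \<le> T" and "0 \<le> B" and "B < (MIN j\<in>{0..<T}. g j)"
  shows "real T * B\<^sup>2 \<le> (\<Sum>j<T. (g j)\<^sup>2)"
proof -
  have "{..<T} \<noteq> {}" using assms(1) by (simp add: lessThan_empty_iff)
  then have "\<forall>j\<in>{..<T}. B < g j" using assms(3) by (simp add: atLeast0LessThan)
  then have "(\<Sum>j<T. B\<^sup>2) \<le> (\<Sum>j<T. (g j)\<^sup>2)"
    using assms(2) by (intro sum_mono power_mono) (auto intro: less_imp_le)
  then show ?thesis by simp
qed

text \<open>One step of an evolving set process: for a threshold U uniform on [0,1] and values
  p y \<in> [0,1], the new set is the level set {y. p y \<ge> U}.  The threshold set of S' is the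
  set of thresholds producing S'; these sets partition [0,1].\<close>
definition threshold_set :: "'a set \<Rightarrow> ('a \<Rightarrow> real) \<Rightarrow> 'a set \<Rightarrow> real set" where
  "threshold_set V p S' = {u \<in> {0..1}. {y \<in> V. p y \<ge> u} = S'}"

lemma threshold_set_measurable:
  assumes "finite V" and "J \<in> sets lborel"
  shows "threshold_set V p S' \<inter> J \<in> sets lborel"
proof (cases "S' \<subseteq> V")
  case True
  have "threshold_set V p S' \<inter> J
      = {u \<in> space borel. u \<in> {0..1} \<and> (\<forall>y\<in>V. (u \<le> p y) = (y \<in> S')) \<and> u \<in> J}"
    using True unfolding threshold_set_def by auto
  also have "\<dots> \<in> sets borel" using assms by measurable
  finally show ?thesis by simp
next
  case False
  then have "threshold_set V p S' = {}" unfolding threshold_set_def by auto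
  then show ?thesis by simp
qed

lemma threshold_set_finite_measure: "emeasure lborel (threshold_set V p S' \<inter> J) \<noteq> \<infinity>"
proof -
  have "emeasure lborel (threshold_set V p S' \<inter> J) \<le> emeasure lborel {0..1::real}"
    by (rule emeasure_mono) (auto simp: threshold_set_def)
  then show ?thesis by (auto simp: top_unique)
qed

lemma sum_threshold_measure:
  assumes "finite V" and "J \<in> sets lborel" and "D \<subseteq> Pow V"
  shows "(\<Sum>S'\<in>D. measure lborel (threshold_set V p S' \<inter> J))
       = measure lborel {u \<in> J \<inter> {0..1}. {y \<in> V. p y \<ge> u} \<in> D}"
proof -
  have "finite D" using assms by (meson finite_Pow_iff finite_subset)
  have "{u \<in> J \<inter> {0..1}. {y \<in> V. p y \<ge> u} \<in> D} = (\<Union>S'\<in>D. threshold_set V p S' \<inter> J)"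
    unfolding threshold_set_def by auto
  moreover have "measure lborel (\<Union>S'\<in>D. threshold_set V p S' \<inter> J)
               = (\<Sum>S'\<in>D. measure lborel (threshold_set V p S' \<inter> J))"
  proof (rule measure_finite_Union[OF \<open>finite D\<close>])
    show "(\<lambda>S'. threshold_set V p S' \<inter> J) ` D \<subseteq> sets lborel"
      using threshold_set_measurable[OF assms(1,2)] by blast
    show "disjoint_family_on (\<lambda>S'. threshold_set V p S' \<inter> J) D"
      by (auto simp: disjoint_family_on_def threshold_set_def)
    show "\<And>S'. S' \<in> D \<Longrightarrow> emeasure lborel (threshold_set V p S' \<inter> J) \<noteq> \<infinity>"
      by (rule threshold_set_finite_measure)
  qed
  ultimately show ?thesis by simp
qed

lemma sum_threshold_measure_Pow:
  assumes "finite V" and "J \<in> sets lborel"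
  shows "(\<Sum>S'\<in>Pow V. measure lborel (threshold_set V p S' \<inter> J)) = measure lborel (J \<inter> {0..1})"
  using sum_threshold_measure[OF assms, of "Pow V" p]
  by (auto intro!: arg_cong[where f = "measure lborel"])

text \<open>Expected weight of the level set, restricted to thresholds in J: vertex y is in the
  level set exactly when U \<le> p y.\<close>
lemma sum_threshold_weight:
  assumes "finite V" and "J \<in> sets lborel"
  shows "(\<Sum>S'\<in>Pow V. (\<Sum>y\<in>S'. w y) * measure lborel (threshold_set V p S' \<inter> J))
       = (\<Sum>y\<in>V. w y * measure lborel {u \<in> J \<inter> {0..1}. u \<le> p y})"
proof -
  let ?m = "\<lambda>S'. measure lborel (threshold_set V p S' \<inter> J)"
  have "(\<Sum>S'\<in>Pow V. (\<Sum>y\<in>S'. w y) * ?m S')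
      = (\<Sum>S'\<in>Pow V. \<Sum>y\<in>V. if y \<in> S' then w y * ?m S' else 0)"
  proof (rule sum.cong[OF refl])
    fix S' assume "S' \<in> Pow V"
    then have "S' = {y \<in> V. y \<in> S'}" by auto
    then show "(\<Sum>y\<in>S'. w y) * ?m S' = (\<Sum>y\<in>V. if y \<in> S' then w y * ?m S' else 0)"
      using assms(1) by (simp add: sum.inter_filter[symmetric] sum_distrib_right)
  qed
  also have "\<dots> = (\<Sum>y\<in>V. w y * (\<Sum>S'\<in>{S' \<in> Pow V. y \<in> S'}. ?m S'))"
    using assms(1) by (subst sum.swap) (simp add: sum.inter_filter[symmetric] sum_distrib_left)
  also have "\<dots> = (\<Sum>y\<in>V. w y * measure lborel {u \<in> J \<inter> {0..1}. u \<le> p y})"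
  proof (rule sum.cong[OF refl])
    fix y assume "y \<in> V"
    then have "{u \<in> J \<inter> {0..1}. {y \<in> V. p y \<ge> u} \<in> {S' \<in> Pow V. y \<in> S'}}
             = {u \<in> J \<inter> {0..1}. u \<le> p y}" by auto
    then show "w y * (\<Sum>S'\<in>{S' \<in> Pow V. y \<in> S'}. ?m S') = w y * measure lborel {u \<in> J \<inter> {0..1}. u \<le> p y}"
      using sum_threshold_measure[OF assms, of "{S' \<in> Pow V. y \<in> S'}" p] by auto
  qed
  finally show ?thesis .
qed

lemma measure_below_UNIV: "0 \<le> q \<Longrightarrow> q \<le> 1 \<Longrightarrow> measure lborel {u \<in> UNIV \<inter> {0..1}. u \<le> q} = q"
proof -
  assume "0 \<le> q" "q \<le> 1"
  then have "{u \<in> UNIV \<inter> {0..1}. u \<le> q} = {0..q}" by auto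
  then show ?thesis using \<open>0 \<le> q\<close> by simp
qed

lemma measure_below_lower_half: "0 \<le> q \<Longrightarrow> measure lborel {u \<in> {0..1/2} \<inter> {0..1}. u \<le> q} = min q (1/2)"
proof -
  assume "0 \<le> q"
  then have "{u \<in> {0..1/2} \<inter> {0..1}. u \<le> q} = {0..min q (1/2)}" by auto
  then show ?thesis using \<open>0 \<le> q\<close> by simp
qed

lemma measure_below_upper_half: "q \<le> 1 \<Longrightarrow> measure lborel {u \<in> {1/2<..} \<inter> {0..1}. u \<le> q} = max (q - 1/2) 0"
proof -
  assume "q \<le> 1"
  then have interval: "{u \<in> {1/2<..} \<inter> {0..1}. u \<le> q} = {1/2<..q}" by auto
  show ?thesis unfolding interval by (cases "1/2 \<le> q") auto
qed

lemma sqrt_le_am_gm: "0 \<le> x \<Longrightarrow> 0 < a \<Longrightarrow> sqrt x \<le> (x / a + a) / 2"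
proof -
  assume x: "0 \<le> x" and a: "0 < a"
  have "0 \<le> (sqrt x - a)\<^sup>2" by simp
  then have "2 * a * sqrt x \<le> x + a\<^sup>2" using x by (simp add: power2_eq_square algebra_simps)
  then show ?thesis using a by (simp add: field_simps power2_eq_square)
qed

text \<open>AM-GM bound for the expected square root of the level-set weight on thresholds in J;
  a is a free scaling parameter to be optimised later.\<close>
lemma threshold_sqrt_weight_on:
  assumes "finite V" and "J \<in> sets lborel" and "0 < a" and w: "\<And>y. y \<in> V \<Longrightarrow> 0 \<le> w y"
  shows "(\<Sum>S'\<in>Pow V. measure lborel (threshold_set V p S' \<inter> J) * sqrt (\<Sum>y\<in>S'. w y))
     \<le> (\<Sum>y\<in>V. w y * measure lborel {u \<in> J \<inter> {0..1}. u \<le> p y}) / (2 * a)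
        + a / 2 * measure lborel (J \<inter> {0..1})"
proof -
  let ?m = "\<lambda>S'. measure lborel (threshold_set V p S' \<inter> J)"
  have "(\<Sum>S'\<in>Pow V. ?m S' * sqrt (\<Sum>y\<in>S'. w y)) \<le> (\<Sum>S'\<in>Pow V. ?m S' * (((\<Sum>y\<in>S'. w y) / a + a) / 2))"
    using w \<open>0 < a\<close> by (intro sum_mono mult_left_mono sqrt_le_am_gm sum_nonneg) auto
  also have "\<dots> = (\<Sum>S'\<in>Pow V. (\<Sum>y\<in>S'. w y) * ?m S') / (2 * a) + a / 2 * (\<Sum>S'\<in>Pow V. ?m S')"
    using \<open>0 < a\<close>
    by (simp add: field_simps sum.distrib sum_divide_distrib[symmetric] sum_distrib_left)
  finally show ?thesis
    by (simp add: sum_threshold_weight[OF assms(1,2)] sum_threshold_measure_Pow[OF assms(1,2)])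
qed

lemma measure_threshold_split:
  assumes "finite V"
  shows "measure lborel (threshold_set V p S')
       = measure lborel (threshold_set V p S' \<inter> {0..1/2}) + measure lborel (threshold_set V p S' \<inter> {1/2<..})"
proof -
  have "threshold_set V p S' = (threshold_set V p S' \<inter> {0..1/2}) \<union> (threshold_set V p S' \<inter> {1/2<..})"
    unfolding threshold_set_def by auto
  moreover have "measure lborel ((threshold_set V p S' \<inter> {0..1/2}) \<union> (threshold_set V p S' \<inter> {1/2<..}))
      = measure lborel (threshold_set V p S' \<inter> {0..1/2}) + measure lborel (threshold_set V p S' \<inter> {1/2<..})"
    using threshold_set_finite_measure threshold_set_measurable[OF assms]
    by (intro measure_Union) auto
  ultimately show ?thesis by simp
qed

context
  fixes V :: "'a set" and p :: "'a \<Rightarrow> real"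
  assumes finite_V: "finite V" and p_range: "\<And>y. y \<in> V \<Longrightarrow> 0 \<le> p y \<and> p y \<le> 1"
begin

lemma threshold_expected_weight:
  "(\<Sum>S'\<in>Pow V. (\<Sum>y\<in>S'. w y) * measure lborel (threshold_set V p S')) = (\<Sum>y\<in>V. w y * p y)"
  using sum_threshold_weight[OF finite_V, of UNIV w p] p_range measure_below_UNIV
  by (simp cong: sum.cong)

lemma threshold_expected_sqrt_weight:
  assumes "0 < a1" and "0 < a2" and "\<And>y. y \<in> V \<Longrightarrow> 0 \<le> w y"
  shows "(\<Sum>S'\<in>Pow V. measure lborel (threshold_set V p S') * sqrt (\<Sum>y\<in>S'. w y))
       \<le> (\<Sum>y\<in>V. w y * min (p y) (1/2)) / (2 * a1) + a1 / 4
         + (\<Sum>y\<in>V. w y * max (p y - 1/2) 0) / (2 * a2) + a2 / 4"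
proof -
  have lower: "{0..1/2::real} \<inter> {0..1} = {0..1/2}" and upper: "{(1/2::real)<..} \<inter> {0..1} = {1/2<..1}"
    by auto
  have "(\<Sum>S'\<in>Pow V. measure lborel (threshold_set V p S') * sqrt (\<Sum>y\<in>S'. w y))
     = (\<Sum>S'\<in>Pow V. measure lborel (threshold_set V p S' \<inter> {0..1/2}) * sqrt (\<Sum>y\<in>S'. w y))
      + (\<Sum>S'\<in>Pow V. measure lborel (threshold_set V p S' \<inter> {1/2<..}) * sqrt (\<Sum>y\<in>S'. w y))"
    by (simp add: measure_threshold_split[OF finite_V] sum.distrib[symmetric] distrib_right)
  also have "\<dots> \<le> ((\<Sum>y\<in>V. w y * measure lborel {u \<in> {0..1/2} \<inter> {0..1}. u \<le> p y}) / (2 * a1)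
                   + a1 / 2 * measure lborel ({0..1/2::real} \<inter> {0..1}))
               + ((\<Sum>y\<in>V. w y * measure lborel {u \<in> {1/2<..} \<inter> {0..1}. u \<le> p y}) / (2 * a2)
                   + a2 / 2 * measure lborel ({(1/2::real)<..} \<inter> {0..1}))"
    using assms by (intro add_mono threshold_sqrt_weight_on finite_V) auto
  also have "\<dots> = (\<Sum>y\<in>V. w y * min (p y) (1/2)) / (2 * a1) + a1 / 4
                 + (\<Sum>y\<in>V. w y * max (p y - 1/2) 0) / (2 * a2) + a2 / 4"
    using p_range measure_below_lower_half measure_below_upper_half
    unfolding lower upper by (simp cong: sum.cong)
  finally show ?thesis .
qed

end

text \<open>The numerical inequality that results from choosing a1, a2 optimally in terms of the
  conductance f.\<close>
lemma two_halves_algebra: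
  fixes f :: real
  assumes "0 \<le> f" and "f \<le> 1"
  shows "(1 + f) / (4 * (1 + f/2)) + (1 - f) / (4 * (1 - f/2)) + 1/2 \<le> 1 - f\<^sup>2 / 8"
proof -
  have ff: "f * f \<le> 1" using assms by (simp add: mult_le_one)
  then have "8 - 2 * f * f \<noteq> 0" "4 - f * f \<noteq> 0" "2 + f \<noteq> 0" "2 - f \<noteq> 0" using assms by auto
  then have "(1 + f) / (4 * (1 + f/2)) + (1 - f) / (4 * (1 - f/2)) + 1/2 = 1 - f\<^sup>2 / (8 - 2 * f\<^sup>2)"
    by (simp add: field_simps power2_eq_square)
  moreover have "f\<^sup>2 / 8 \<le> f\<^sup>2 / (8 - 2 * f\<^sup>2)"
    using ff assms by (intro divide_left_mono) (auto simp: power2_eq_square)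
  ultimately show ?thesis by simp
qed

context
  fixes V :: "'a set" and E :: "'a \<Rightarrow> 'a \<Rightarrow> bool"
  assumes graph: "simple_graph V E" and deg_pos: "\<forall>x\<in>V. deg V E x > 0"
begin

text \<open>Indicator of adjacency, so that degrees, volumes and boundaries become double sums.\<close>
definition adj :: "'a \<Rightarrow> 'a \<Rightarrow> real" where
  "adj x y = (if E x y then 1 else 0)"

lemma finite_V: "finite V"
  using graph by (simp add: simple_graph_def)

lemma adj_sym: "adj x y = adj y x"
  using graph unfolding adj_def simple_graph_def by auto

lemma adj_nonneg: "0 \<le> adj x y"
  unfolding adj_def by auto

lemma deg_eq_sum_adj: "real (deg V E x) = (\<Sum>z\<in>V. adj x z)"
  unfolding deg_def adj_def using finite_V by (simp add: sum.inter_filter[symmetric])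

lemma sum_adj_le_deg: "S \<subseteq> V \<Longrightarrow> (\<Sum>z\<in>S. adj x z) \<le> real (deg V E x)"
  unfolding deg_eq_sum_adj using finite_V by (intro sum_mono2) (auto simp: adj_nonneg)

lemma vol_eq_sum_adj: "vol V E S = (\<Sum>x\<in>S. \<Sum>y\<in>V. adj x y)"
  unfolding vol_def deg_eq_sum_adj ..

lemma bdry_eq_sum_adj: "S \<subseteq> V \<Longrightarrow> bdry V E S = (\<Sum>x\<in>S. \<Sum>y\<in>V-S. adj x y)"
proof -
  assume S: "S \<subseteq> V"
  then have "finite S" using finite_V finite_subset by auto
  have "{(x, y). x \<in> S \<and> y \<in> V - S \<and> E x y} = Sigma S (\<lambda>x. {y \<in> V - S. E x y})" by auto
  then have "bdry V E S = real (\<Sum>x\<in>S. card {y \<in> V - S. E x y})"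
    unfolding bdry_def using \<open>finite S\<close> finite_V by simp
  also have "\<dots> = (\<Sum>x\<in>S. \<Sum>y\<in>V-S. adj x y)"
    unfolding of_nat_sum adj_def using finite_V by (simp add: sum.inter_filter[symmetric])
  finally show ?thesis .
qed

lemma lazy_pS_formula:
  assumes "S \<subseteq> V"
  shows "lazy_pS V E x S = (\<Sum>y\<in>S. adj x y) / (2 * real (deg V E x)) + (if x \<in> S then 1/2 else 0)"
proof -
  have "finite S" using assms finite_V finite_subset by auto
  have "lazy_p V E x y = adj x y / (2 * real (deg V E x)) + (if x = y then 1/2 else 0)" for y
    using graph unfolding lazy_p_def adj_def simple_graph_def by auto
  then show ?thesis
    unfolding lazy_pS_def using \<open>finite S\<close>
    by (simp add: sum.distrib sum_divide_distrib[symmetric] sum.delta)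
qed

lemma neighbour_fraction_le_half:
  assumes "S \<subseteq> V" and "x \<in> V"
  shows "0 \<le> (\<Sum>y\<in>S. adj x y) / (2 * real (deg V E x))"
    and "(\<Sum>y\<in>S. adj x y) / (2 * real (deg V E x)) \<le> 1/2"
    and "0 < real (deg V E x)"
  using sum_adj_le_deg[OF assms(1), of x] deg_pos assms(2)
  by (auto simp: sum_nonneg adj_nonneg field_simps)

lemma lazy_pS_range:
  assumes "S \<subseteq> V" and "x \<in> V"
  shows "0 \<le> lazy_pS V E x S \<and> lazy_pS V E x S \<le> 1"
proof -
  define q where "q = (\<Sum>y\<in>S. adj x y) / (2 * real (deg V E x))"
  have "0 \<le> q" "q \<le> 1/2" using neighbour_fraction_le_half[OF assms] unfolding q_def by auto
  then show ?thesis unfolding lazy_pS_formula[OF assms(1)] q_def[symmetric] by auto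
qed

text \<open>Degree-weighted mass of p(\<cdot>,S) below 1/2: each vertex of S contributes d(y)/2 and each
  vertex outside S half of its edges into S, giving (\<mu>(S) + \<partial>(S)) / 2.\<close>
lemma expected_lower_half:
  assumes S: "S \<subseteq> V"
  shows "(\<Sum>y\<in>V. real (deg V E y) * min (lazy_pS V E y S) (1/2)) = (vol V E S + bdry V E S) / 2"
proof -
  have "(\<Sum>y\<in>V. real (deg V E y) * min (lazy_pS V E y S) (1/2))
     = (\<Sum>y\<in>V. if y \<in> S then real (deg V E y) / 2 else (\<Sum>x\<in>S. adj y x) / 2)"
  proof (rule sum.cong[OF refl])
    fix y assume "y \<in> V"
    then show "real (deg V E y) * min (lazy_pS V E y S) (1/2)
             = (if y \<in> S then real (deg V E y) / 2 else (\<Sum>x\<in>S. adj y x) / 2)"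
      using neighbour_fraction_le_half[OF S, of y]
      unfolding lazy_pS_formula[OF S] by (auto simp: min_def field_simps)
  qed
  also have "\<dots> = (\<Sum>y\<in>S. real (deg V E y) / 2) + (\<Sum>y\<in>V-S. (\<Sum>x\<in>S. adj y x) / 2)"
    using S by (simp add: sum.If_cases[OF finite_V] Int_absorb1 Int_absorb2 Diff_eq)
  also have "(\<Sum>y\<in>V-S. (\<Sum>x\<in>S. adj y x) / 2) = bdry V E S / 2"
    unfolding bdry_eq_sum_adj[OF S] sum_divide_distrib[symmetric]
    by (subst sum.swap) (simp add: adj_sym)
  finally show ?thesis unfolding vol_def by (simp add: sum_divide_distrib[symmetric])
qed

text \<open>Degree-weighted mass of p(\<cdot>,S) above 1/2: only vertices of S contribute, with half of
  their internal edges, giving (\<mu>(S) - \<partial>(S)) / 2.\<close>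
lemma expected_upper_half:
  assumes S: "S \<subseteq> V"
  shows "(\<Sum>y\<in>V. real (deg V E y) * max (lazy_pS V E y S - 1/2) 0) = (vol V E S - bdry V E S) / 2"
proof -
  have "finite S" using S finite_V finite_subset by auto
  have "(\<Sum>y\<in>V. real (deg V E y) * max (lazy_pS V E y S - 1/2) 0)
     = (\<Sum>y\<in>V. if y \<in> S then (\<Sum>x\<in>S. adj y x) / 2 else 0)"
  proof (rule sum.cong[OF refl])
    fix y assume "y \<in> V"
    then show "real (deg V E y) * max (lazy_pS V E y S - 1/2) 0 = (if y \<in> S then (\<Sum>x\<in>S. adj y x) / 2 else 0)"
      using neighbour_fraction_le_half[OF S, of y]
      unfolding lazy_pS_formula[OF S] by (auto simp: max_def field_simps)
  qed
  also have "\<dots> = (\<Sum>y\<in>S. ((\<Sum>x\<in>V. adj y x) - (\<Sum>x\<in>V-S. adj y x)) / 2)"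
    using S finite_V \<open>finite S\<close>
    by (simp add: sum.If_cases Int_absorb1 sum_diff Diff_Diff_Int)
  finally show ?thesis
    unfolding vol_eq_sum_adj bdry_eq_sum_adj[OF S] by (simp add: sum_subtractf sum_divide_distrib[symmetric])
qed

lemma vol_nonneg: "0 \<le> vol V E S"
  unfolding vol_def by (simp add: sum_nonneg)

lemma vol_pos:
  assumes "S \<subseteq> V" and "S \<noteq> {}"
  shows "0 < vol V E S"
proof -
  have "finite S" using assms(1) finite_V finite_subset by auto
  moreover have "\<forall>x\<in>S. 0 < real (deg V E x)" using assms(1) deg_pos by auto
  ultimately show ?thesis unfolding vol_def using assms(2) by (intro sum_pos) auto
qed

lemma vol_le_vol_V: "S \<subseteq> V \<Longrightarrow> vol V E S \<le> vol V E V"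
  unfolding vol_def using finite_V by (intro sum_mono2) auto

lemma cond_range: "S \<subseteq> V \<Longrightarrow> S \<noteq> {} \<Longrightarrow> 0 \<le> cond V E S \<and> cond V E S \<le> 1"
proof -
  assume S: "S \<subseteq> V" "S \<noteq> {}"
  have "bdry V E S \<le> vol V E S"
    unfolding bdry_eq_sum_adj[OF S(1)] vol_eq_sum_adj
    using finite_V by (intro sum_mono sum_mono2) (auto simp: adj_nonneg)
  then show ?thesis
    unfolding cond_def using vol_pos[OF S] by (simp add: bdry_def divide_le_eq_1)
qed

lemma esp_K_eq: "esp_K V E S S' = measure lborel (threshold_set V (\<lambda>y. lazy_pS V E y S) S')"
  unfolding esp_K_def threshold_set_def ..

lemma esp_Khat_nonneg: "0 \<le> esp_Khat V E S S'"
  unfolding esp_Khat_def esp_K_def using vol_nonneg by simp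

lemma esp_Khat_empty: "esp_Khat V E S {} = 0"
  unfolding esp_Khat_def vol_def by simp

text \<open>The volume is a martingale of the ESP: E_K[\<mu>(S')] = \<mu>(S).  This is what makes the
  volume-biased kernel stochastic.\<close>
lemma esp_expected_volume:
  assumes "S \<subseteq> V"
  shows "(\<Sum>S'\<in>Pow V. vol V E S' * esp_K V E S S') = vol V E S"
proof -
  have "(\<Sum>S'\<in>Pow V. vol V E S' * esp_K V E S S') = (\<Sum>y\<in>V. real (deg V E y) * lazy_pS V E y S)"
    unfolding vol_def esp_K_eq
    by (rule threshold_expected_weight[OF finite_V]) (use lazy_pS_range[OF assms] in auto)
  also have "\<dots> = (\<Sum>y\<in>V. real (deg V E y) * min (lazy_pS V E y S) (1/2))
                + (\<Sum>y\<in>V. real (deg V E y) * max (lazy_pS V E y S - 1/2) 0)"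
    by (simp add: sum.distrib[symmetric] distrib_left[symmetric])
       (rule sum.cong, auto simp: min_def max_def)
  also have "\<dots> = vol V E S"
    unfolding expected_lower_half[OF assms] expected_upper_half[OF assms] by (simp add: field_simps)
  finally show ?thesis .
qed

lemma esp_Khat_row_sum: "S \<subseteq> V \<Longrightarrow> S \<noteq> {} \<Longrightarrow> (\<Sum>S'\<in>Pow V. esp_Khat V E S S') = 1"
  using esp_expected_volume[of S] vol_pos[of S]
  unfolding esp_Khat_def by (simp add: sum_divide_distrib[symmetric] mult.commute)

lemma esp_stochastic_kernel: "stochastic_kernel (Pow V) (Pow V - {{}}) (esp_Khat V E)"
  using finite_V esp_Khat_nonneg esp_Khat_row_sum esp_Khat_empty
  by unfold_locales auto

lemma esp_sqrt_volume_contraction: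
  assumes S: "S \<subseteq> V" "S \<noteq> {}"
  shows "(\<Sum>S'\<in>Pow V. esp_K V E S S' * sqrt (vol V E S')) \<le> sqrt (vol V E S) * (1 - (cond V E S)\<^sup>2 / 8)"
proof -
  define v f s where "v = vol V E S" and "f = cond V E S" and "s = sqrt v"
  have "0 < v" using vol_pos[OF S] unfolding v_def .
  then have s: "0 < s" "s * s = v" unfolding s_def by auto
  have f: "0 \<le> f" "f \<le> 1" using cond_range[OF S] unfolding f_def by auto
  have bdry: "bdry V E S = f * v" unfolding f_def v_def cond_def using \<open>0 < v\<close> v_def by simp
  have "(\<Sum>S'\<in>Pow V. esp_K V E S S' * sqrt (vol V E S'))
      \<le> (\<Sum>y\<in>V. real (deg V E y) * min (lazy_pS V E y S) (1/2)) / (2 * (s * (1 + f/2))) + s * (1 + f/2) / 4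
        + (\<Sum>y\<in>V. real (deg V E y) * max (lazy_pS V E y S - 1/2) 0) / (2 * (s * (1 - f/2))) + s * (1 - f/2) / 4"
    unfolding vol_def esp_K_eq
    by (rule threshold_expected_sqrt_weight[OF finite_V]) (use lazy_pS_range[OF S(1)] s f in auto)
  also have "\<dots> = s * ((1 + f) / (4 * (1 + f/2)) + (1 - f) / (4 * (1 - f/2)) + 1/2)"
  proof -
    have nz: "1 + f/2 \<noteq> 0" "1 - f/2 \<noteq> 0" "0 < s * 8 + f * (s * 4)" using s(1) f by (auto simp: add_pos_nonneg)
    have "(v + f * v) / 2 / (2 * (s * (1 + f/2))) = s * ((1 + f) / (4 * (1 + f/2)))"
      and "(v - f * v) / 2 / (2 * (s * (1 - f/2))) = s * ((1 - f) / (4 * (1 - f/2)))"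
      unfolding s(2)[symmetric] using s(1) nz by (simp_all add: field_simps)
    then show ?thesis
      unfolding expected_lower_half[OF S(1)] expected_upper_half[OF S(1)] bdry v_def[symmetric]
      by (simp add: field_simps)
  qed
  also have "\<dots> \<le> s * (1 - f\<^sup>2 / 8)"
    using two_halves_algebra[OF f] s by simp
  finally show ?thesis unfolding s_def v_def f_def .
qed

text \<open>From ln x \<le> x - 1 with x = sqrt (v/w).\<close>
lemma log_le_via_sqrt:
  fixes v w :: real
  assumes "0 < v" and "0 < w"
  shows "ln v + 2 - 2 * sqrt (v / w) \<le> ln w"
proof -
  have "ln (sqrt (v / w)) \<le> sqrt (v / w) - 1" using assms by (intro ln_le_minus_one) simp
  moreover have "ln (sqrt (v / w)) = (ln v - ln w) / 2" using assms by (simp add: ln_sqrt ln_div)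
  ultimately show ?thesis by simp
qed

text \<open>Under the volume-biased ESP the log-volume drifts upward by at least \<phi>(S)^2/4, since
  E_Khat[ln \<mu>(S')] \<ge> ln \<mu>(S) + 2 - 2 E_K[sqrt \<mu>(S')] / sqrt \<mu>(S).\<close>
lemma esp_log_volume_drift:
  assumes S: "S \<subseteq> V" "S \<noteq> {}"
  shows "ln (vol V E S) + (cond V E S)\<^sup>2 / 4 \<le> (\<Sum>S'\<in>Pow V. esp_Khat V E S S' * ln (vol V E S'))"
proof -
  define v where "v = vol V E S"
  have v: "0 < v" using vol_pos[OF S] unfolding v_def .
  have pointwise: "esp_Khat V E S S' * (ln v + 2) - 2 * (esp_K V E S S' * sqrt (vol V E S')) / sqrt v
                 \<le> esp_Khat V E S S' * ln (vol V E S')"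
    if "S' \<in> Pow V" for S'
  proof (cases "S' = {}")
    case False
    define w where "w = vol V E S'"
    have w: "0 < w" using vol_pos[OF _ False] that unfolding w_def by auto
    have "esp_Khat V E S S' * sqrt (v / w) = esp_K V E S S' * sqrt w / sqrt v"
      unfolding esp_Khat_def w_def[symmetric] v_def[symmetric]
      using v w by (simp add: real_sqrt_divide field_simps)
    moreover have "esp_Khat V E S S' * (ln v + 2 - 2 * sqrt (v / w)) \<le> esp_Khat V E S S' * ln w"
      using log_le_via_sqrt[OF v w] by (rule mult_left_mono[OF _ esp_Khat_nonneg])
    ultimately show ?thesis unfolding w_def[symmetric] by (simp add: algebra_simps)
  qed (simp add: esp_Khat_empty vol_def)
  have "(\<Sum>S'\<in>Pow V. esp_K V E S S' * sqrt (vol V E S')) / sqrt v \<le> 1 - (cond V E S)\<^sup>2 / 8"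
    using esp_sqrt_volume_contraction[OF S] v unfolding v_def[symmetric]
    by (simp add: pos_divide_le_eq mult.commute)
  then have "ln v + 2 - 2 * (1 - (cond V E S)\<^sup>2 / 8)
      \<le> ln v + 2 - 2 * ((\<Sum>S'\<in>Pow V. esp_K V E S S' * sqrt (vol V E S')) / sqrt v)"
    using mult_left_mono[of _ _ 2] by simp
  also have "\<dots> = (\<Sum>S'\<in>Pow V. esp_Khat V E S S' * (ln v + 2) - 2 * (esp_K V E S S' * sqrt (vol V E S')) / sqrt v)"
    using esp_Khat_row_sum[OF S]
    by (simp add: sum_subtractf sum_distrib_right[symmetric] sum_distrib_left[symmetric] sum_divide_distrib[symmetric])
  also have "\<dots> \<le> (\<Sum>S'\<in>Pow V. esp_Khat V E S S' * ln (vol V E S'))"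
    by (rule sum_mono) (rule pointwise)
  finally show ?thesis unfolding v_def by (simp add: algebra_simps)
qed

text \<open>Volumes of nonempty sets are at least 1, and \<mu>(V) > 1 (an edge has two endpoints), so
  the log-volumes lie in [0, ln \<mu>(V)] with ln \<mu>(V) > 0.\<close>
lemma vol_at_least_one: "S \<subseteq> V \<Longrightarrow> S \<noteq> {} \<Longrightarrow> 1 \<le> vol V E S"
proof -
  assume "S \<subseteq> V" "S \<noteq> {}"
  then obtain x where "x \<in> S" "x \<in> V" by auto
  then have "real (deg V E x) \<le> vol V E S"
    unfolding vol_def using \<open>S \<subseteq> V\<close> finite_V finite_subset by (intro member_le_sum) auto
  moreover have "1 \<le> real (deg V E x)" using deg_pos \<open>x \<in> V\<close> by (simp add: Suc_le_eq)
  ultimately show ?thesis by linarith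
qed

lemma log_vol_le_log_vol_V: "S \<subseteq> V \<Longrightarrow> S \<noteq> {} \<Longrightarrow> ln (vol V E S) \<le> ln (vol V E V)"
  using vol_pos[of S] vol_le_vol_V[of S] by simp

lemma vol_V_gt_one: "V \<noteq> {} \<Longrightarrow> 1 < vol V E V"
proof -
  assume "V \<noteq> {}"
  then obtain x where x: "x \<in> V" by auto
  then have "{y \<in> V. E x y} \<noteq> {}" using deg_pos unfolding deg_def by (metis card.empty less_irrefl)
  then obtain y where y: "y \<in> V" "E x y" by auto
  then have "x \<noteq> y" using graph by (auto simp: simple_graph_def)
  then have "vol V E {x, y} = real (deg V E x) + real (deg V E y)" unfolding vol_def by simp
  moreover have "vol V E {x, y} \<le> vol V E V" using x y by (intro vol_le_vol_V) auto
  moreover have "1 \<le> real (deg V E x)" "1 \<le> real (deg V E y)" using deg_pos x y by (auto simp: Suc_le_eq)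
  ultimately show ?thesis by linarith
qed

lemma esp_expected_sum_cond_sq:
  assumes S0: "S0 \<subseteq> V" "S0 \<noteq> {}"
  shows "(\<Sum>xs\<in>paths (Pow V) n. path_weight (esp_Khat V E) (S0 # xs) * (\<Sum>j<Suc n. (cond V E ((S0 # xs) ! j))\<^sup>2))
       \<le> 4 * ln (vol V E V)"
proof -
  interpret esp: stochastic_kernel "Pow V" "Pow V - {{}}" "esp_Khat V E"
    by (rule esp_stochastic_kernel)
  have drift: "4 * ln (vol V E S) + (cond V E S)\<^sup>2 \<le> (\<Sum>S'\<in>Pow V. esp_Khat V E S S' * (4 * ln (vol V E S')))"
    if "S \<in> Pow V - {{}}" for S
    using esp_log_volume_drift[of S] that by (simp add: sum_distrib_left[symmetric] mult.left_commute)
  have "(\<Sum>xs\<in>paths (Pow V) n. path_weight (esp_Khat V E) (S0 # xs) * (\<Sum>j<Suc n. (cond V E ((S0 # xs) ! j))\<^sup>2))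
      \<le> 4 * ln (vol V E V) - 4 * ln (vol V E S0)"
    using S0 by (intro esp.additive_functional_bound[OF drift]) (auto simp: log_vol_le_log_vol_V)
  then show ?thesis using ln_ge_zero[OF vol_at_least_one[OF S0]] by linarith
qed

end

theorem corollary1:
  fixes V :: "'a set" and E :: "'a \<Rightarrow> 'a \<Rightarrow> bool" and S0 :: "'a set"
    and T :: nat and c :: real
  assumes "simple_graph V E"
    and "\<forall>x\<in>V. deg V E x > 0"
    and "S0 \<subseteq> V" and "S0 \<noteq> {}"
    and "T \<ge> 1" and "c > 0"
  shows "vbesp_prob V E S0 T
           (\<lambda>Ss. (MIN j\<in>{0..<T}. cond V E (Ss ! j))
                   \<le> sqrt c * sqrt (4 / real T * ln (vol V E V)))
         \<ge> 1 - 1 / c"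
proof -
  interpret esp: stochastic_kernel "Pow V" "Pow V - {{}}" "esp_Khat V E"
    using esp_stochastic_kernel[OF assms(1,2)] .
  obtain n where T: "T = Suc n" using assms(5) by (cases T) auto
  define L where "L = ln (vol V E V)"
  define B where "B = sqrt c * sqrt (4 / real T * L)"
  define F where "F = (\<lambda>Ss. \<Sum>j<T. (cond V E (Ss ! j))\<^sup>2)"
  have "1 < vol V E V" using vol_V_gt_one[OF assms(1,2)] assms(3,4) by blast
  then have "0 < L" unfolding L_def by simp
  have S0: "S0 \<in> Pow V - {{}}" using assms(3,4) by auto
  have expected_F: "(\<Sum>xs\<in>paths (Pow V) n. path_weight (esp_Khat V E) (S0 # xs) * F (S0 # xs)) \<le> 4 * L"
    using esp_expected_sum_cond_sq[OF assms(1-4)] unfolding F_def T L_def .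
  have "0 \<le> B" and B_squared: "real T * B\<^sup>2 = 4 * c * L"
    unfolding B_def using assms(5,6) \<open>0 < L\<close> by (simp_all add: power_mult_distrib)
  have large_F: "4 * c * L \<le> F Ss" if "\<not> (MIN j\<in>{0..<T}. cond V E (Ss ! j)) \<le> B" for Ss
    using sum_squares_ge_if_min_gt[OF assms(5) \<open>0 \<le> B\<close> that[unfolded not_le]] B_squared
    unfolding F_def by simp
  have prob: "vbesp_prob V E S0 T P
      = (\<Sum>xs\<in>paths (Pow V) n. if P (S0 # xs) then path_weight (esp_Khat V E) (S0 # xs) else 0)" for P
    unfolding vbesp_prob_def paths_def T by simp
  have "1 - 1 / c \<le> 1 - (\<Sum>xs\<in>paths (Pow V) n. path_weight (esp_Khat V E) (S0 # xs) * F (S0 # xs)) / (4 * c * L)"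
    using expected_F assms(6) \<open>0 < L\<close> by (simp add: field_simps)
  also have "\<dots> \<le> vbesp_prob V E S0 T (\<lambda>Ss. (MIN j\<in>{0..<T}. cond V E (Ss ! j)) \<le> B)"
    unfolding prob
    using esp.total_path_weight[OF S0] esp.path_weight_nonneg large_F assms(6) \<open>0 < L\<close>
    by (intro markov_lower_bound) (auto simp: finite_paths finite_V[OF assms(1,2)] F_def sum_nonneg)
  finally show ?thesis unfolding B_def L_def .
qed

end
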